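(* Let $G_0^*$ be a $k$-uniform hypergraph on $n$ vertices and let $\{U_1,\dots,U_t\}$ be a partition of its vertex set into $t$ sets of size $p$ (so $n=pt$). Order the vertices of $G_0^*$ so that $U_i$ consists of the $((i-1)p+1)$-th through the $(ip)$-th vertices, and compute $A(G_0^* )$ in this order. For $i=1,\dots,t$ let $G_i^*$ be a $(k,r)$-regular hypergraph on $m\ge 2$ vertices (the same $k$, $r$, $m$ for all $i$). Put $$a=\begin{cases} p\left(\binom{p+m-2}{k-2}-\binom{p-2}{k-2}\right) & \text{if } p\ge 2,\\ 0 & \text{if } p=1,\end{cases}\qquad b=\binom{p+m-2}{k-2},\qquad c=\binom{p+m-2}{k-2}-\binom{m-2}{k-2},$$ and $Y_i=A(G_i^* )+c(J_m-I_m)$. Let $G^*=G_0^*\odot_p^t G_i^*$ be the generalized corona. Then for every real $\lambda$ such that $Y_i-\lambda I_m$ is invertible for all $i=1,\dots,t$, $$P_{A(G^* )}(\lambda)=\Big(\prod_{i=1}^t \det(Y_i-\lambda I_m)\Big)^p\,\det\!\Big(A(G_0^* )+I_t\otimes\Big(\big(a-\tfrac{b^2pm}{r(k-1)+c(m-1)-\lambda}\big)J_p-(a+\lambda)I_p\Big)\Big).$$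
   Context: All hypergraphs are finite and simple: a hypergraph $G^*=(V,E)$ consists of a finite vertex set $V$ and a set $E$ of subsets of $V$ (hyperedges), each of size at least $2$. It is $k$-uniform if every hyperedge has exactly $k$ elements, and $(k,r)$-regular if it is $k$-uniform and every vertex lies in exactly $r$ hyperedges. For a hypergraph with vertices $v_1,\dots,v_n$, the adjacency matrix $A(G^* )$ is the $n\times n$ matrix whose $(i,j)$ entry, for $i\ne j$, is the number of hyperedges containing both $v_i$ and $v_j$, and whose diagonal entries are $0$. $J_n$ (resp. $J_{a,b}$) is the all-ones $n\times n$ (resp. $a\times b$) matrix, $I_n$ the identity matrix, $\otimes$ the Kronecker product. For a square matrix $M$, $P_M(\lambda)=\det(M-\lambda I)$. Binomial coefficients $\binom{x}{y}$ with integers $x\ge 0$ and $y$ are $0$ when $y<0$ or $y>x$. Generalized corona: let $G_0^*$ be a $k$-uniform hypergraph with vertex set $V_0$, $\{U_1,\dots,U_t\}$ a partition of $V_0$ with $|U_i|=p$, and $G_1^*,\dots,G_t^*$ $k$-uniform hypergraphs. The generalized corona $G_0^*\odot_p^t G_i^*$ is the $k$-uniform hypergraph obtained as follows: for each $i$ take $p$ copies $G_i^{*(1)},\dots,G_i^{*(p)}$ of $G_i^*$, all copies pairwise vertex-disjoint and disjoint from $V_0$. The vertex set is $V_0$ together with the vertices of all copies; the hyperedges are the hyperedges of $G_0^*$, the hyperedges of every copy, and, for every $i\in\{1,\dots,t\}$ and $j\in\{1,\dots,p\}$, every $k$-element subset of $U_i\cup V(G_i^{*(j)})$ that meets both $U_i$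 and $V(G_i^{*(j)})$. *)

theory Defs
  imports "Jordan_Normal_Form.Determinant" "Jordan_Normal_Form.Matrix"
begin

definition hypergraph :: "'a set \<Rightarrow> 'a set set \<Rightarrow> bool" where
  "hypergraph V E \<longleftrightarrow> finite V \<and> (\<forall>e\<in>E. e \<subseteq> V \<and> card e \<ge> 2)"

definition k_uniform :: "'a set \<Rightarrow> 'a set set \<Rightarrow> nat \<Rightarrow> bool" where
  "k_uniform V E k \<longleftrightarrow> hypergraph V E \<and> (\<forall>e\<in>E. card e = k)"

definition kr_regular :: "'a set \<Rightarrow> 'a set set \<Rightarrow> nat \<Rightarrow> nat \<Rightarrow> bool" where
  "kr_regular V E k r \<longleftrightarrow> k_uniform V E k \<and> (\<forall>v\<in>V. card {e\<in>E. v \<in> e} = r)"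

definition adj_mat :: "nat \<Rightarrow> nat set set \<Rightarrow> real mat" where
  "adj_mat N E = mat N N (\<lambda>(i,j). if i = j then 0 else real (card {e\<in>E. i \<in> e \<and> j \<in> e}))"

definition char_val :: "real mat \<Rightarrow> real \<Rightarrow> real" where
  "char_val M lam = det (M - lam \<cdot>\<^sub>m 1\<^sub>m (dim_row M))"

definition J_mat :: "nat \<Rightarrow> real mat" where
  "J_mat n = mat n n (\<lambda>_. 1)"

definition kron :: "real mat \<Rightarrow> real mat \<Rightarrow> real mat" where
  "kron A B = mat (dim_row A * dim_row B) (dim_col A * dim_col B)
     (\<lambda>(i,j). A $$ (i div dim_row B, j div dim_col B) * B $$ (i mod dim_row B, j mod dim_col B))"

definition binom :: "nat \<Rightarrow> int \<Rightarrow> nat" where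
  "binom x y = (if y < 0 then 0 else x choose (nat y))"

(* Generalized corona G_0 \<odot>_p^t G_i, with concrete vertex labels:
   G_0 has vertices 0..<p*t, U_i = {i*p ..< (i+1)*p} (i < t);
   G_i (i < t) has vertices 0..<m;
   vertex v of copy j (j < p) of G_i is labelled p*t + (i*p + j)*m + v. *)
definition part_U :: "nat \<Rightarrow> nat \<Rightarrow> nat set" where
  "part_U p i = {i*p ..< (i+1)*p}"

definition copy_vtx :: "nat \<Rightarrow> nat \<Rightarrow> nat \<Rightarrow> nat \<Rightarrow> nat \<Rightarrow> nat \<Rightarrow> nat" where
  "copy_vtx p t m i j v = p*t + (i*p + j)*m + v"

definition copy_W :: "nat \<Rightarrow> nat \<Rightarrow> nat \<Rightarrow> nat \<Rightarrow> nat \<Rightarrow> nat set" where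
  "copy_W p t m i j = copy_vtx p t m i j ` {0..<m}"

definition corona_edges ::
  "nat \<Rightarrow> nat \<Rightarrow> nat \<Rightarrow> nat \<Rightarrow> nat set set \<Rightarrow> (nat \<Rightarrow> nat set set) \<Rightarrow> nat set set" where
  "corona_edges k p t m E0 Gs =
     E0
     \<union> (\<Union>i<t. \<Union>j<p. (\<lambda>e. copy_vtx p t m i j ` e) ` Gs i)
     \<union> (\<Union>i<t. \<Union>j<p. {S. S \<subseteq> part_U p i \<union> copy_W p t m i j \<and> card S = k
                           \<and> S \<inter> part_U p i \<noteq> {} \<and> S \<inter> copy_W p t m i j \<noteq> {}})"

definition corona_size :: "nat \<Rightarrow> nat \<Rightarrow> nat \<Rightarrow> nat" where
  "corona_size p t m = p*t + t*p*m"

end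

theory Submission
  imports Defs
begin

(*
  List the vertices of the corona as V(G_0) followed by the copies, and let A be its adjacency
  matrix.  Each entry of A counts k-subsets through two vertices x, y: those that lie in
  U_i \<union> W (W a copy) and meet both parts number binom(p+m-2, k-2), minus binom(p-2, k-2)
  if x, y \<in> U_i and minus binom(m-2, k-2) if x, y \<in> W.  Hence

    A - \<lambda>I = [[A(G_0) + a I_t\<otimes>(J_p - I_p) - \<lambda>I, B], [B^T, Q]],

  where B has entry b between U_i and each copy of G_i, and Q is block diagonal with p blocks
  Y_i - \<lambda>I for each i.  All rows of Y_i - \<lambda>I sum to s - \<lambda> with s = r(k-1) + c(m-1), which
  is nonzero since otherwise the all-ones vector lies in the kernel of an invertible matrix.
  The rows of B^T are constant on each copy, so X = B^T/(s - \<lambda>) solves Q X = B^T, and the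
  Schur complement formula det = det Q * det(P - B X), with B B^T = p m b^2 I_t\<otimes>J_p, finishes.
*)

section \<open>Block matrices\<close>

lemma div_eq_iff_mult_bounds:
  fixes x m q :: nat
  assumes "0 < m"
  shows "x div m = q \<longleftrightarrow> q * m \<le> x \<and> x < q * m + m"
proof
  assume "x div m = q"
  then show "q * m \<le> x \<and> x < q * m + m"
    using assms div_times_less_eq_dividend[of x m] dividend_less_div_times[of m x] by auto
qed (auto intro: div_nat_eqI simp: mult.commute)

lemma prod_lessThan_mult_div:
  fixes f :: "nat \<Rightarrow> 'a :: comm_semiring_1"
  shows "(\<Prod>q<n * k. f (q div k)) = (\<Prod>i<n. f i) ^ k"
proof (cases "k = 0")
  case False
  have "(\<Prod>q<n * k. f (q div k)) = (\<Prod>i<n. \<Prod>q\<in>{i * k..<i * k + k}. f (q div k))"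
    by (rule prod.nat_group[symmetric])
  also have "\<dots> = (\<Prod>i<n. f i ^ k)"
  proof (rule prod.cong[OF refl])
    fix i
    have "q div k = i" if "q \<in> {i * k..<i * k + k}" for q
      using that False div_eq_iff_mult_bounds[of k q i] by simp
    then have "(\<Prod>q\<in>{i * k..<i * k + k}. f (q div k)) = (\<Prod>q\<in>{i * k..<i * k + k}. f i)"
      by (intro prod.cong) auto
    then show "(\<Prod>q\<in>{i * k..<i * k + k}. f (q div k)) = f i ^ k" by simp
  qed
  finally show ?thesis by (simp add: prod_power_distrib)
qed simp

lemma sum_lessThan_mult_block:
  fixes g :: "nat \<Rightarrow> 'a :: comm_monoid_add"
  assumes "q < n" and "0 < m"
  shows "(\<Sum>z<n * m. if z div m = q then g (z mod m) else 0) = (\<Sum>w<m. g w)"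
proof -
  have "{z \<in> {..<n * m}. z div m = q} = {0 + q * m..<m + q * m}"
  proof -
    have "q * m + m \<le> n * m" using assms(1) by (metis Suc_leI add.commute mult_Suc mult_le_mono1)
    then show ?thesis using div_eq_iff_mult_bounds[OF assms(2)] by auto
  qed
  then have "(\<Sum>z<n * m. if z div m = q then g (z mod m) else 0) = (\<Sum>z\<in>{0 + q * m..<m + q * m}. g (z mod m))"
    by (simp add: sum.inter_filter[symmetric])
  also have "\<dots> = (\<Sum>w\<in>{0..<m}. g ((w + q * m) mod m))"
    by (rule sum.shift_bounds_nat_ivl)
  finally show ?thesis by (simp add: atLeast0LessThan)
qed

lemma index_mult_mat_sum:
  assumes "A \<in> carrier_mat nr n" "B \<in> carrier_mat n nc" "i < nr" "j < nc"
  shows "(A * B) $$ (i, j) = (\<Sum>z<n. A $$ (i, z) * B $$ (z, j))"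
  using assms by (simp add: scalar_prod_def atLeast0LessThan)

lemma det_four_block_mat_schur:
  fixes P B C Q X :: "'a :: idom mat"
  assumes P: "P \<in> carrier_mat n1 n1" and B: "B \<in> carrier_mat n1 n2"
    and C: "C \<in> carrier_mat n2 n1" and Q: "Q \<in> carrier_mat n2 n2"
    and X: "X \<in> carrier_mat n2 n1" and QX: "Q * X = C"
  shows "det (four_block_mat P B C Q) = det (P - B * X) * det Q"
proof -
  let ?L = "four_block_mat (1\<^sub>m n1) (0\<^sub>m n1 n2) (- X) (1\<^sub>m n2)"
  have L: "?L \<in> carrier_mat (n1 + n2) (n1 + n2)" by simp
  have det_L: "det ?L = 1"
    by (subst det_four_block_mat_upper_right_zero[of _ n1 _ n2]) (use X in auto)
  have "four_block_mat P B C Q * ?L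
      = four_block_mat (P * 1\<^sub>m n1 + B * - X) (P * 0\<^sub>m n1 n2 + B * 1\<^sub>m n2)
          (C * 1\<^sub>m n1 + Q * - X) (C * 0\<^sub>m n1 n2 + Q * 1\<^sub>m n2)"
    by (rule mult_four_block_mat[OF P B C Q]) (use X in auto)
  also have "\<dots> = four_block_mat (P - B * X) B (0\<^sub>m n2 n1) Q"
  proof -
    have "C * 1\<^sub>m n1 + Q * - X = C - C"
      using C Q X add_uminus_minus_mat[OF C C] by (simp add: QX)
    then show ?thesis
      using P B C Q X add_uminus_minus_mat[of P n1 n1 "B * X"] by simp
  qed
  finally have "four_block_mat P B C Q * ?L = four_block_mat (P - B * X) B (0\<^sub>m n2 n1) Q" .
  then have "det (four_block_mat P B C Q) = det (four_block_mat (P - B * X) B (0\<^sub>m n2 n1) Q)"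
    using det_mult[OF _ L, of "four_block_mat P B C Q"] det_L P Q by simp
  also have "\<dots> = det (P - B * X) * det Q"
    by (rule det_four_block_mat_lower_left_zero[of _ n1 _ n2]) (use P B X Q in auto)
  finally show ?thesis .
qed

lemma four_block_mat_minus_smult_one:
  fixes P B C Q :: "'a :: ring_1 mat"
  assumes "P \<in> carrier_mat n1 n1" "B \<in> carrier_mat n1 n2"
    and "C \<in> carrier_mat n2 n1" "Q \<in> carrier_mat n2 n2"
  shows "four_block_mat P B C Q - l \<cdot>\<^sub>m 1\<^sub>m (n1 + n2)
       = four_block_mat (P - l \<cdot>\<^sub>m 1\<^sub>m n1) B C (Q - l \<cdot>\<^sub>m 1\<^sub>m n2)"
  by (rule eq_matI) (use assms in auto)

definition block_diag_mat :: "nat \<Rightarrow> nat \<Rightarrow> (nat \<Rightarrow> 'a :: zero mat) \<Rightarrow> 'a mat" where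
  "block_diag_mat n m F = mat (n * m) (n * m)
     (\<lambda>(x, y). if x div m = y div m then F (x div m) $$ (x mod m, y mod m) else 0)"

lemma dim_block_diag_mat [simp]:
  "dim_row (block_diag_mat n m F) = n * m" "dim_col (block_diag_mat n m F) = n * m"
  by (simp_all add: block_diag_mat_def)

lemma block_diag_mat_carrier [simp]: "block_diag_mat n m F \<in> carrier_mat (n * m) (n * m)"
  by (simp add: carrier_matI)

lemma index_block_diag_mat:
  "x < n * m \<Longrightarrow> y < n * m \<Longrightarrow>
    block_diag_mat n m F $$ (x, y) = (if x div m = y div m then F (x div m) $$ (x mod m, y mod m) else 0)"
  by (simp add: block_diag_mat_def)

lemma block_diag_mat_cong:
  assumes "\<And>q. q < n \<Longrightarrow> F q = G q"
  shows "block_diag_mat n m F = block_diag_mat n m G"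
  using assms by (auto simp: block_diag_mat_def less_mult_imp_div_less intro!: cong_mat)

lemma block_diag_mat_Suc:
  assumes Fn: "F n \<in> carrier_mat m m" and m: "0 < m"
  shows "block_diag_mat (Suc n) m F
       = four_block_mat (block_diag_mat n m F) (0\<^sub>m (n * m) m) (0\<^sub>m m (n * m)) (F n)"
    (is "_ = ?R")
proof (rule eq_matI)
  have last_block: "x div m = n" "x mod m = x - n * m" if "\<not> x < n * m" "x < n * m + m" for x
    using that div_eq_iff_mult_bounds[OF m, of x n] minus_mult_div_eq_mod[of x m]
    by (auto simp: mult.commute)
  have first_blocks: "x div m < n" if "x < n * m" for x
    using that m by (simp add: div_less_iff_less_mult)
  fix x y assume "x < dim_row ?R" and "y < dim_col ?R"
  then have x: "x < n * m + m" and y: "y < n * m + m" using Fn by auto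
  then have "x < Suc n * m" "y < Suc n * m" by simp_all
  then have lhs: "block_diag_mat (Suc n) m F $$ (x, y)
      = (if x div m = y div m then F (x div m) $$ (x mod m, y mod m) else 0)"
    by (rule index_block_diag_mat)
  show "block_diag_mat (Suc n) m F $$ (x, y) = ?R $$ (x, y)"
  proof (cases "x < n * m"; cases "y < n * m")
    assume "x < n * m" "y < n * m"
    then show ?thesis using Fn lhs by (simp add: index_block_diag_mat)
  next
    assume "x < n * m" "\<not> y < n * m"
    then show ?thesis using Fn lhs x y first_blocks[of x] last_block[of y] by simp
  next
    assume "\<not> x < n * m" "y < n * m"
    then show ?thesis using Fn lhs x y first_blocks[of y] last_block[of x] by simp
  next
    assume "\<not> x < n * m" "\<not> y < n * m"
    then show ?thesis using Fn lhs x y last_block[of x] last_block[of y] by simp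
  qed
qed (use Fn in auto)

lemma det_block_diag_mat:
  fixes F :: "nat \<Rightarrow> 'a :: idom mat"
  assumes "\<And>q. q < n \<Longrightarrow> F q \<in> carrier_mat m m" and "0 < m"
  shows "det (block_diag_mat n m F) = (\<Prod>q<n. det (F q))"
  using assms(1)
proof (induction n)
  case (Suc n)
  then have Fn: "F n \<in> carrier_mat m m" by simp
  have "det (block_diag_mat (Suc n) m F) = det (block_diag_mat n m F) * det (F n)"
    unfolding block_diag_mat_Suc[of F n m, OF Fn assms(2)]
    by (rule det_four_block_mat_upper_right_zero[of _ "n * m" _ m]) (use Fn in auto)
  then show ?case using Suc by simp
qed (simp add: block_diag_mat_def)

lemma det_block_diag_mat_div:
  fixes F :: "nat \<Rightarrow> 'a :: idom mat"
  assumes "\<And>i. i < n \<Longrightarrow> F i \<in> carrier_mat m m" and "0 < m"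
  shows "det (block_diag_mat (n * k) m (\<lambda>q. F (q div k))) = (\<Prod>i<n. det (F i)) ^ k"
proof -
  have "F (q div k) \<in> carrier_mat m m" if "q < n * k" for q
    using assms(1) less_mult_imp_div_less[OF that] .
  then show ?thesis
    using det_block_diag_mat[of "n * k" "\<lambda>q. F (q div k)" m] assms(2)
    by (simp add: prod_lessThan_mult_div[of "\<lambda>i. det (F i)"])
qed

lemma block_diag_mat_minus_smult_one:
  fixes F :: "nat \<Rightarrow> 'a :: ring_1 mat"
  assumes m: "0 < m"
  shows "block_diag_mat n m F - l \<cdot>\<^sub>m 1\<^sub>m (n * m) = block_diag_mat n m (\<lambda>q. F q - l \<cdot>\<^sub>m 1\<^sub>m m)"
proof (rule eq_matI)
  fix x y assume "x < dim_row (block_diag_mat n m (\<lambda>q. F q - l \<cdot>\<^sub>m 1\<^sub>m m))"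
    and "y < dim_col (block_diag_mat n m (\<lambda>q. F q - l \<cdot>\<^sub>m 1\<^sub>m m))"
  then have x: "x < n * m" and y: "y < n * m" by simp_all
  have "x = y \<longleftrightarrow> x div m = y div m \<and> x mod m = y mod m"
    by (metis div_mult_mod_eq)
  then show "(block_diag_mat n m F - l \<cdot>\<^sub>m 1\<^sub>m (n * m)) $$ (x, y)
      = block_diag_mat n m (\<lambda>q. F q - l \<cdot>\<^sub>m 1\<^sub>m m) $$ (x, y)"
    using x y m by (simp add: index_block_diag_mat)
qed simp_all

lemma block_diag_mat_mult_block_constant_rows:
  fixes F :: "nat \<Rightarrow> 'a :: comm_semiring_1 mat"
  assumes C: "C \<in> carrier_mat (n * m) nc" and m: "0 < m"
    and rows: "\<And>x x' y. x < n * m \<Longrightarrow> x' < n * m \<Longrightarrow> x div m = x' div m \<Longrightarrow> y < nc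
                 \<Longrightarrow> C $$ (x, y) = C $$ (x', y)"
    and row_sum: "\<And>q i. q < n \<Longrightarrow> i < m \<Longrightarrow> (\<Sum>j<m. F q $$ (i, j)) = \<sigma>"
  shows "block_diag_mat n m F * C = \<sigma> \<cdot>\<^sub>m C"
proof (rule eq_matI)
  fix x y assume "x < dim_row (\<sigma> \<cdot>\<^sub>m C)" and "y < dim_col (\<sigma> \<cdot>\<^sub>m C)"
  then have x: "x < n * m" and y: "y < nc" using C by auto
  have q: "x div m < n" using x m by (simp add: div_less_iff_less_mult)
  have "(block_diag_mat n m F * C) $$ (x, y) = (\<Sum>z<n * m. block_diag_mat n m F $$ (x, z) * C $$ (z, y))"
    by (rule index_mult_mat_sum[OF block_diag_mat_carrier C x y])
  also have "\<dots> = (\<Sum>z<n * m. if z div m = x div m then F (x div m) $$ (x mod m, z mod m) * C $$ (x, y) else 0)"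
  proof (rule sum.cong[OF refl])
    fix z assume "z \<in> {..<n * m}"
    then have z: "z < n * m" by simp
    have "z div m = x div m \<Longrightarrow> C $$ (z, y) = C $$ (x, y)" using rows[OF z x _ y] .
    then show "block_diag_mat n m F $$ (x, z) * C $$ (z, y)
        = (if z div m = x div m then F (x div m) $$ (x mod m, z mod m) * C $$ (x, y) else 0)"
      using x z by (auto simp: index_block_diag_mat)
  qed
  also have "\<dots> = (\<Sum>w<m. F (x div m) $$ (x mod m, w)) * C $$ (x, y)"
    using sum_lessThan_mult_block[OF q m, of "\<lambda>w. F (x div m) $$ (x mod m, w) * C $$ (x, y)"]
    by (simp add: sum_distrib_right)
  also have "\<dots> = \<sigma> * C $$ (x, y)" using row_sum[OF q] m by simp
  finally show "(block_diag_mat n m F * C) $$ (x, y) = (\<sigma> \<cdot>\<^sub>m C) $$ (x, y)"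
    using x y C by simp
qed (use C in auto)

lemma invertible_mat_row_sum_nonzero:
  fixes A :: "'a :: field mat"
  assumes A: "A \<in> carrier_mat n n" and n: "0 < n" and inv: "invertible_mat A"
    and rows: "\<And>i. i < n \<Longrightarrow> (\<Sum>j<n. A $$ (i, j)) = \<sigma>"
  shows "\<sigma> \<noteq> 0"
proof
  assume "\<sigma> = 0"
  let ?v = "vec n (\<lambda>_. 1 :: 'a)"
  have Av: "A *\<^sub>v ?v = 0\<^sub>v n"
    using A rows \<open>\<sigma> = 0\<close> by (intro eq_vecI) (auto simp: scalar_prod_def atLeast0LessThan)
  obtain B where BA: "B * A = 1\<^sub>m n" and B: "B \<in> carrier_mat n n"
    using inv A unfolding invertible_mat_def inverts_mat_def
    by (metis carrier_matD carrier_matI index_mult_mat(2,3) index_one_mat(2,3))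
  have "?v = (B * A) *\<^sub>v ?v" using BA by simp
  also have "\<dots> = B *\<^sub>v 0\<^sub>v n" using A B Av by (simp add: assoc_mult_mat_vec[of B n n A n ?v])
  also have "\<dots> = 0\<^sub>v n" using B by (intro eq_vecI) auto
  finally show False using n by (metis index_vec index_zero_vec(1) zero_neq_one)
qed

lemma block_diag_mat_mult_inverse_row_sum:
  fixes F :: "nat \<Rightarrow> 'a :: field mat"
  assumes C: "C \<in> carrier_mat (n * m) nc" and m: "0 < m"
    and rows: "\<And>x x' y. x < n * m \<Longrightarrow> x' < n * m \<Longrightarrow> x div m = x' div m \<Longrightarrow> y < nc
                 \<Longrightarrow> C $$ (x, y) = C $$ (x', y)"
    and F: "\<And>q. q < n \<Longrightarrow> F q \<in> carrier_mat m m" "\<And>q. q < n \<Longrightarrow> invertible_mat (F q)"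
    and row_sum: "\<And>q i. q < n \<Longrightarrow> i < m \<Longrightarrow> (\<Sum>j<m. F q $$ (i, j)) = \<sigma>"
  shows "block_diag_mat n m F * ((1 / \<sigma>) \<cdot>\<^sub>m C) = C"
proof (cases "n = 0")
  case False
  then have "\<sigma> \<noteq> 0" using invertible_mat_row_sum_nonzero[OF F(1) m F(2) row_sum, of 0] by simp
  moreover have "block_diag_mat n m F * C = \<sigma> \<cdot>\<^sub>m C"
    by (rule block_diag_mat_mult_block_constant_rows[OF C m rows row_sum])
  ultimately show ?thesis
    using C by (intro eq_matI) (auto simp: mult_smult_distrib[OF block_diag_mat_carrier C])
qed (use C in auto)

lemma dim_kron [simp]:
  "dim_row (kron A B) = dim_row A * dim_row B" "dim_col (kron A B) = dim_col A * dim_col B"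
  by (simp_all add: kron_def)

lemma index_kron_one_mat:
  assumes "M \<in> carrier_mat p p" and "x < t * p" and "y < t * p"
  shows "kron (1\<^sub>m t) M $$ (x, y) = (if x div p = y div p then M $$ (x mod p, y mod p) else 0)"
  using assms by (simp add: kron_def less_mult_imp_div_less)

section \<open>Counting edges through two vertices\<close>

lemma dim_adj_mat [simp]: "dim_row (adj_mat n E) = n" "dim_col (adj_mat n E) = n"
  by (simp_all add: adj_mat_def)

lemma index_adj_mat:
  "x < n \<Longrightarrow> y < n \<Longrightarrow> adj_mat n E $$ (x, y) = (if x = y then 0 else real (card {e \<in> E. x \<in> e \<and> y \<in> e}))"
  by (simp add: adj_mat_def)

lemma adj_mat_row_sum:
  assumes reg: "kr_regular {0..<m} E k r" and v: "v < m"
  shows "(\<Sum>w<m. adj_mat m E $$ (v, w)) = real r * (real k - 1)"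
proof -
  have sub: "\<And>e. e \<in> E \<Longrightarrow> e \<subseteq> {0..<m}" and card_e: "\<And>e. e \<in> E \<Longrightarrow> card e = k"
    and two: "\<And>e. e \<in> E \<Longrightarrow> 2 \<le> card e" and deg: "card {e \<in> E. v \<in> e} = r"
    using reg v unfolding kr_regular_def k_uniform_def hypergraph_def by auto
  let ?Ev = "{e \<in> E. v \<in> e}" and ?W = "{..<m} - {v}"
  have "E \<subseteq> Pow {0..<m}" using sub by blast
  then have finE: "finite E" by (rule finite_subset) simp
  have "(\<Sum>w\<in>?W. card {e \<in> ?Ev. w \<in> e}) = (k - 1) * card ?Ev"
  proof (rule sum_multicount)
    show "\<forall>e\<in>?Ev. card {w \<in> ?W. w \<in> e} = k - 1"
    proof
      fix e assume e: "e \<in> ?Ev"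
      then have "{w \<in> ?W. w \<in> e} = e - {v}" using sub[of e] by auto
      then show "card {w \<in> ?W. w \<in> e} = k - 1"
        using e sub[of e] card_e[of e] finite_subset[of e "{0..<m}"] by simp
    qed
  qed (use finE in auto)
  then have "(\<Sum>w<m. adj_mat m E $$ (v, w)) = real ((k - 1) * card ?Ev)"
    using v by (simp add: adj_mat_def sum.remove[of "{..<m}" v] flip: of_nat_sum)
  moreover have "real ((k - 1) * r) = real r * (real k - 1)"
  proof (cases "r = 0")
    case False
    then obtain e where "e \<in> E" using deg by fastforce
    then have "1 \<le> k" using card_e[of e] two[of e] by simp
    then show ?thesis by simp
  qed simp
  ultimately show ?thesis using deg by simp
qed

lemma regular_adj_mat_complement_row_sum:
  assumes reg: "kr_regular {0..<m} E k r" and v: "v < m"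
  shows "(\<Sum>w<m. (adj_mat m E + c \<cdot>\<^sub>m (J_mat m - 1\<^sub>m m) - l \<cdot>\<^sub>m 1\<^sub>m m) $$ (v, w))
       = real r * (real k - 1) + c * (real m - 1) - l"
proof -
  have "(\<Sum>w<m. (adj_mat m E + c \<cdot>\<^sub>m (J_mat m - 1\<^sub>m m) - l \<cdot>\<^sub>m 1\<^sub>m m) $$ (v, w))
      = (\<Sum>w<m. adj_mat m E $$ (v, w) + c - (if v = w then c + l else 0))"
    using v by (intro sum.cong) (auto simp: J_mat_def)
  also have "\<dots> = (\<Sum>w<m. adj_mat m E $$ (v, w)) + real m * c - (c + l)"
    using v by (simp add: sum.distrib sum_subtractf)
  finally show ?thesis using adj_mat_row_sum[OF reg v] by (simp add: algebra_simps)
qed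

lemma card_subsets_containing_pair:
  assumes A: "finite A" and xy: "x \<noteq> y"
  shows "card {S. S \<subseteq> A \<and> card S = k \<and> x \<in> S \<and> y \<in> S}
       = (if x \<in> A \<and> y \<in> A then binom (card A - 2) (int k - 2) else 0)"
proof (cases "x \<in> A \<and> y \<in> A \<and> 2 \<le> k")
  case True
  let ?L = "{S. S \<subseteq> A \<and> card S = k \<and> x \<in> S \<and> y \<in> S}"
  let ?R = "{T. T \<subseteq> A - {x, y} \<and> card T = k - 2}"
  have "bij_betw (\<lambda>S. S - {x, y}) ?L ?R"
  proof (rule bij_betw_byWitness[where f' = "\<lambda>T. T \<union> {x, y}"])
    show "(\<lambda>S. S - {x, y}) ` ?L \<subseteq> ?R"
    proof
      fix T assume "T \<in> (\<lambda>S. S - {x, y}) ` ?L"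
      then obtain S where S: "S \<in> ?L" "T = S - {x, y}" by auto
      then have "card T = card S - card {x, y}"
        using finite_subset[OF _ A] by (simp add: card_Diff_subset)
      then show "T \<in> ?R" using S xy by auto
    qed
    show "(\<lambda>T. T \<union> {x, y}) ` ?R \<subseteq> ?L"
    proof
      fix S assume "S \<in> (\<lambda>T. T \<union> {x, y}) ` ?R"
      then obtain T where T: "T \<in> ?R" "S = T \<union> {x, y}" by auto
      have "finite T" using T(1) finite_subset[OF _ A] by blast
      then have "card S = card T + card {x, y}"
        unfolding T(2) by (rule card_Un_disjoint) (use T(1) in auto)
      then show "S \<in> ?L" using T xy True by auto
    qed
  qed auto
  then have "card ?L = card (A - {x, y}) choose (k - 2)"
    using A by (simp add: bij_betw_same_card n_subsets)
  moreover have "card (A - {x, y}) = card A - 2" using True A xy by (simp add: card_Diff_subset)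
  moreover have "nat (int k - 2) = k - 2" using True by simp
  ultimately show ?thesis using True by (simp add: binom_def)
next
  case False
  have "\<not> (S \<subseteq> A \<and> card S = k \<and> x \<in> S \<and> y \<in> S)" for S
  proof
    assume S: "S \<subseteq> A \<and> card S = k \<and> x \<in> S \<and> y \<in> S"
    then have "card {x, y} \<le> k" using finite_subset[OF _ A] by (metis card_mono empty_subsetI insert_subset)
    then show False using S False xy by auto
  qed
  then have empty: "{S. S \<subseteq> A \<and> card S = k \<and> x \<in> S \<and> y \<in> S} = {}" by blast
  show ?thesis unfolding empty using False by (auto simp: binom_def)
qed

definition mixed_subsets :: "nat \<Rightarrow> 'a set \<Rightarrow> 'a set \<Rightarrow> 'a set set" where
  "mixed_subsets k U W = {S. S \<subseteq> U \<union> W \<and> card S = k \<and> S \<inter> U \<noteq> {} \<and> S \<inter> W \<noteq> {}}"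

lemma finite_mixed_subsets: "finite U \<Longrightarrow> finite W \<Longrightarrow> finite (mixed_subsets k U W)"
  unfolding mixed_subsets_def by (rule finite_subset[of _ "Pow (U \<union> W)"]) auto

lemma card_mixed_subsets_containing_pair:
  assumes U: "finite U" and W: "finite W" and UW: "U \<inter> W = {}" and xy: "x \<noteq> y"
  shows "real (card {S \<in> mixed_subsets k U W. x \<in> S \<and> y \<in> S})
       = (if x \<in> U \<union> W \<and> y \<in> U \<union> W then
            real (binom (card U + card W - 2) (int k - 2))
            - (if x \<in> U \<and> y \<in> U then real (binom (card U - 2) (int k - 2)) else 0)
            - (if x \<in> W \<and> y \<in> W then real (binom (card W - 2) (int k - 2)) else 0)
          else 0)" (is "_ = ?count")
proof -
  define T where "T A = {S. S \<subseteq> A \<and> card S = k \<and> x \<in> S \<and> y \<in> S}" for A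
  have fin: "finite (T A)" if "finite A" for A
    unfolding T_def by (rule finite_subset[of _ "Pow A"]) (use that in auto)
  have card_T: "real (card (T A)) = (if x \<in> A \<and> y \<in> A then real (binom (card A - 2) (int k - 2)) else 0)"
    if "finite A" for A
    unfolding T_def using card_subsets_containing_pair[OF that xy, of k] by simp
  have split: "{S \<in> mixed_subsets k U W. x \<in> S \<and> y \<in> S} = T (U \<union> W) - (T U \<union> T W)"
    using UW unfolding T_def mixed_subsets_def by auto
  have sub: "T U \<union> T W \<subseteq> T (U \<union> W)" and disj: "T U \<inter> T W = {}"
    using UW unfolding T_def by auto
  have fin_UW: "finite (T (U \<union> W))" using fin U W by blast
  have "card (T (U \<union> W) - (T U \<union> T W)) = card (T (U \<union> W)) - (card (T U) + card (T W))"
    using card_Diff_subset[OF finite_subset[OF sub fin_UW] sub] card_Un_disjoint[OF fin[OF U] fin[OF W] disj]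
    by simp
  moreover have "card (T U) + card (T W) \<le> card (T (U \<union> W))"
    using card_mono[OF fin_UW sub] card_Un_disjoint[OF fin[OF U] fin[OF W] disj] by simp
  ultimately have "real (card {S \<in> mixed_subsets k U W. x \<in> S \<and> y \<in> S})
      = real (card (T (U \<union> W))) - real (card (T U)) - real (card (T W))"
    unfolding split by simp
  also have "\<dots> = ?count"
    using U W UW by (auto simp: card_T card_Un_disjoint)
  finally show ?thesis .
qed

section \<open>Edges of the generalized corona\<close>

lemma mem_part_U: "0 < p \<Longrightarrow> z \<in> part_U p i \<longleftrightarrow> z div p = i"
  unfolding part_U_def using div_eq_iff_mult_bounds[of p z i] by auto

lemma part_U_less: "i < t \<Longrightarrow> z \<in> part_U p i \<Longrightarrow> z < p * t"
  unfolding part_U_def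
  by (metis atLeastLessThan_iff Suc_leI mult.commute mult_le_mono1 order_less_le_trans plus_1_eq_Suc add.commute)

lemma copy_W_eq: "copy_W p t m i j = {p * t + (i * p + j) * m..<p * t + (i * p + j) * m + m}"
proof -
  have "copy_W p t m i j = (\<lambda>v. v + (p * t + (i * p + j) * m)) ` {0..<m}"
    unfolding copy_W_def copy_vtx_def by (simp add: add.commute)
  then show ?thesis by (simp add: add.commute)
qed

lemma mem_copy_W: "0 < m \<Longrightarrow> z \<in> copy_W p t m i j \<longleftrightarrow> p * t \<le> z \<and> (z - p * t) div m = i * p + j"
  unfolding copy_W_eq using div_eq_iff_mult_bounds[of m "z - p * t" "i * p + j"] by auto

lemma copy_W_ge: "z \<in> copy_W p t m i j \<Longrightarrow> p * t \<le> z"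
  unfolding copy_W_eq by simp

lemma finite_part_U [simp]: "finite (part_U p i)" and card_part_U [simp]: "card (part_U p i) = p"
  and finite_copy_W [simp]: "finite (copy_W p t m i j)" and card_copy_W [simp]: "card (copy_W p t m i j) = m"
  by (simp_all add: part_U_def copy_W_eq)

lemma part_U_copy_W_disjoint: "i < t \<Longrightarrow> part_U p i \<inter> copy_W p t m i' j = {}"
  using part_U_less copy_W_ge by fastforce

lemma mult_add_eq_iff_div_mod:
  fixes i j p q :: nat
  shows "j < p \<Longrightarrow> i * p + j = q \<longleftrightarrow> i = q div p \<and> j = q mod p"
  by auto

lemma sum_pair_index_delta:
  fixes f :: "'a :: comm_monoid_add" and q t p :: nat
  assumes "q < t * p"
  shows "(\<Sum>i<t. \<Sum>j<p. if i * p + j = q then f else 0) = f"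
proof -
  have "0 < p" using assms by (cases p) auto
  then have "(\<Sum>j<p. if i * p + j = q then f else 0) = (if i = q div p then f else 0)" for i
    by (simp add: mult_add_eq_iff_div_mod sum.delta' conj_commute flip: if_if_eq_conj)
  moreover have "q div p < t" using assms by (rule less_mult_imp_div_less)
  ultimately show ?thesis by simp
qed

definition corona_copy_edges :: "nat \<Rightarrow> nat \<Rightarrow> nat \<Rightarrow> (nat \<Rightarrow> nat set set) \<Rightarrow> nat set set" where
  "corona_copy_edges p t m Gs = (\<Union>i<t. \<Union>j<p. (`) (copy_vtx p t m i j) ` Gs i)"

definition corona_mixed_edges :: "nat \<Rightarrow> nat \<Rightarrow> nat \<Rightarrow> nat \<Rightarrow> nat set set" where
  "corona_mixed_edges k p t m = (\<Union>i<t. \<Union>j<p. mixed_subsets k (part_U p i) (copy_W p t m i j))"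

lemma corona_edges_split:
  "corona_edges k p t m E0 Gs = E0 \<union> corona_copy_edges p t m Gs \<union> corona_mixed_edges k p t m"
  by (simp add: corona_edges_def corona_copy_edges_def corona_mixed_edges_def mixed_subsets_def)

lemma corona_copy_edge_ge: "e \<in> corona_copy_edges p t m Gs \<Longrightarrow> z \<in> e \<Longrightarrow> p * t \<le> z"
  unfolding corona_copy_edges_def copy_vtx_def by auto

lemma corona_mixed_edge_meets_both:
  assumes "e \<in> corona_mixed_edges k p t m"
  shows "\<exists>z\<in>e. z < p * t" and "\<exists>z\<in>e. p * t \<le> z"
  using assms part_U_less copy_W_ge unfolding corona_mixed_edges_def mixed_subsets_def by blast+

lemma finite_corona_copy_edges:
  assumes "\<forall>i<t. finite (Gs i)"
  shows "finite (corona_copy_edges p t m Gs)"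
  using assms unfolding corona_copy_edges_def by simp

lemma finite_corona_mixed_edges: "finite (corona_mixed_edges k p t m)"
  unfolding corona_mixed_edges_def by (simp add: finite_mixed_subsets)

lemma card_corona_edges_through:
  assumes E0: "\<forall>e\<in>E0. e \<subseteq> {0..<p * t}" and Gs: "\<forall>i<t. finite (Gs i)"
  shows "card {e \<in> corona_edges k p t m E0 Gs. x \<in> e \<and> y \<in> e}
       = card {e \<in> E0. x \<in> e \<and> y \<in> e} + card {e \<in> corona_copy_edges p t m Gs. x \<in> e \<and> y \<in> e}
         + card {e \<in> corona_mixed_edges k p t m. x \<in> e \<and> y \<in> e}"
proof -
  let ?A = "{e \<in> E0. x \<in> e \<and> y \<in> e}"
    and ?B = "{e \<in> corona_copy_edges p t m Gs. x \<in> e \<and> y \<in> e}"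
    and ?C = "{e \<in> corona_mixed_edges k p t m. x \<in> e \<and> y \<in> e}"
  have "E0 \<subseteq> Pow {0..<p * t}" using E0 by blast
  then have "finite E0" by (rule finite_subset) simp
  then have fin_A: "finite ?A" by simp
  have fin_B: "finite ?B" using finite_corona_copy_edges[OF Gs] by simp
  have fin_C: "finite ?C" using finite_corona_mixed_edges by simp
  have below: "z < p * t" if "e \<in> E0" "z \<in> e" for e z
    using E0 that atLeastLessThan_iff by blast
  have "?A \<inter> ?B = {}"
  proof (intro equals0I)
    fix e assume "e \<in> ?A \<inter> ?B"
    then show False using below[of e x] corona_copy_edge_ge[of e p t m Gs x] by simp
  qed
  moreover have "(?A \<union> ?B) \<inter> ?C = {}"
  proof (intro equals0I)
    fix e assume e: "e \<in> (?A \<union> ?B) \<inter> ?C"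
    then obtain z z' where "z \<in> e" "z < p * t" "z' \<in> e" "p * t \<le> z'"
      using corona_mixed_edge_meets_both[of e k p t m] by auto
    then show False using e below[of e z'] corona_copy_edge_ge[of e p t m Gs z] by auto
  qed
  moreover have "{e \<in> corona_edges k p t m E0 Gs. x \<in> e \<and> y \<in> e} = ?A \<union> ?B \<union> ?C"
    unfolding corona_edges_split by blast
  ultimately show ?thesis using fin_A fin_B fin_C by (simp add: card_Un_disjoint)
qed

lemma mem_copy_vtx_image:
  assumes "e \<subseteq> {0..<m}" and "j < p"
  shows "z \<in> copy_vtx p t m i j ` e \<longleftrightarrow>
           p * t \<le> z \<and> (z - p * t) div m = i * p + j \<and> (z - p * t) mod m \<in> e"
proof
  assume "z \<in> copy_vtx p t m i j ` e"
  then obtain v where "v \<in> e" "z = copy_vtx p t m i j v" by blast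
  then show "p * t \<le> z \<and> (z - p * t) div m = i * p + j \<and> (z - p * t) mod m \<in> e"
    using assms(1) by (auto simp: copy_vtx_def)
next
  assume z: "p * t \<le> z \<and> (z - p * t) div m = i * p + j \<and> (z - p * t) mod m \<in> e"
  then have "z = copy_vtx p t m i j ((z - p * t) mod m)"
    unfolding copy_vtx_def by (metis add.assoc div_mult_mod_eq le_add_diff_inverse)
  then show "z \<in> copy_vtx p t m i j ` e" using z by blast
qed

lemma corona_copy_edges_through:
  assumes Gs: "\<forall>i<t. \<forall>e\<in>Gs i. e \<subseteq> {0..<m}"
    and x: "p * t \<le> x" "x < p * t + t * p * m" and y: "p * t \<le> y"
  shows "{e \<in> corona_copy_edges p t m Gs. x \<in> e \<and> y \<in> e}
       = (if (x - p * t) div m = (y - p * t) div m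
          then (`) (copy_vtx p t m ((x - p * t) div m div p) ((x - p * t) div m mod p))
                 ` {e \<in> Gs ((x - p * t) div m div p). (x - p * t) mod m \<in> e \<and> (y - p * t) mod m \<in> e}
          else {})"
proof -
  define q where "q = (x - p * t) div m"
  let ?i = "q div p" and ?j = "q mod p" and ?vx = "(x - p * t) mod m" and ?vy = "(y - p * t) mod m"
  have "x - p * t < t * p * m" using x by simp
  then have "q < t * p" unfolding q_def by (rule less_mult_imp_div_less)
  then have i: "?i < t" and p: "0 < p" by (auto simp: less_mult_imp_div_less intro: gr0I)
  have q_split: "?i * p + ?j = q" by simp
  have mem: "z \<in> copy_vtx p t m i' j' ` e' \<longleftrightarrow>
      p * t \<le> z \<and> (z - p * t) div m = i' * p + j' \<and> (z - p * t) mod m \<in> e'"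
    if "i' < t" "j' < p" "e' \<in> Gs i'" for z i' j' e'
    using mem_copy_vtx_image[of e' m j' p z t i'] Gs that by blast
  show ?thesis
    unfolding q_def[symmetric]
  proof (intro Set.set_eqI iffI)
    fix e assume "e \<in> {e \<in> corona_copy_edges p t m Gs. x \<in> e \<and> y \<in> e}"
    then obtain i' j' e' where ij': "i' < t" "j' < p" "e' \<in> Gs i'" and e: "e = copy_vtx p t m i' j' ` e'"
      and "x \<in> e" "y \<in> e"
      unfolding corona_copy_edges_def by blast
    then have "q = i' * p + j'" "(y - p * t) div m = i' * p + j'" "?vx \<in> e'" "?vy \<in> e'"
      using mem[OF ij'] unfolding q_def by auto
    moreover from this(1) have "i' = ?i" "j' = ?j" using ij'(2) mult_add_eq_iff_div_mod by blast+
    ultimately show "e \<in> (if q = (y - p * t) div m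
        then (`) (copy_vtx p t m ?i ?j) ` {e \<in> Gs ?i. ?vx \<in> e \<and> ?vy \<in> e} else {})"
      using ij' e by auto
  next
    fix e assume e: "e \<in> (if q = (y - p * t) div m
        then (`) (copy_vtx p t m ?i ?j) ` {e \<in> Gs ?i. ?vx \<in> e \<and> ?vy \<in> e} else {})"
    then have qy: "q = (y - p * t) div m" by (auto split: if_splits)
    with e obtain e' where e': "e' \<in> Gs ?i" "?vx \<in> e'" "?vy \<in> e'" and e_eq: "e = copy_vtx p t m ?i ?j ` e'"
      by auto
    have j: "?j < p" using p by simp
    have "x \<in> e" "y \<in> e"
      unfolding e_eq mem[OF i j e'(1)] q_split using x y e' qy unfolding q_def by auto
    moreover have "e \<in> corona_copy_edges p t m Gs"
      unfolding corona_copy_edges_def e_eq using i j e'(1) by blast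
    ultimately show "e \<in> {e \<in> corona_copy_edges p t m Gs. x \<in> e \<and> y \<in> e}" by blast
  qed
qed

lemma card_corona_copy_edges_through:
  assumes Gs: "\<forall>i<t. \<forall>e\<in>Gs i. e \<subseteq> {0..<m}"
    and x: "p * t \<le> x" "x < p * t + t * p * m" and y: "p * t \<le> y"
  shows "card {e \<in> corona_copy_edges p t m Gs. x \<in> e \<and> y \<in> e}
       = (if (x - p * t) div m = (y - p * t) div m
          then card {e \<in> Gs ((x - p * t) div m div p). (x - p * t) mod m \<in> e \<and> (y - p * t) mod m \<in> e}
          else 0)"
proof (cases "(x - p * t) div m = (y - p * t) div m")
  case True
  have "inj (copy_vtx p t m i j)" for i j by (simp add: inj_def copy_vtx_def)
  then have "inj_on ((`) (copy_vtx p t m i j)) X" for i j X by (simp add: inj_on_def inj_image_eq_iff)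
  then show ?thesis unfolding corona_copy_edges_through[OF Gs x y] if_P[OF True] by (simp add: card_image)
qed (simp add: corona_copy_edges_through[OF Gs x y])

lemma corona_mixed_blocks_disjoint:
  assumes m: "0 < m" and "i' < t" and j: "j < p" "j' < p"
    and e: "e \<in> mixed_subsets k (part_U p i) (copy_W p t m i j)"
      "e \<in> mixed_subsets k (part_U p i') (copy_W p t m i' j')"
  shows "i = i' \<and> j = j'"
proof -
  obtain z where z: "z \<in> e" "z \<in> copy_W p t m i j" using e(1) unfolding mixed_subsets_def by blast
  then have "z \<notin> part_U p i'" using part_U_less[OF \<open>i' < t\<close>] copy_W_ge by (meson not_le)
  then have "z \<in> copy_W p t m i' j'" using z(1) e(2) unfolding mixed_subsets_def by blast
  then have "i * p + j = i' * p + j'" using z(2) mem_copy_W[OF m] by auto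
  then show ?thesis using j mult_add_eq_iff_div_mod by metis
qed

lemma card_corona_mixed_edges_through:
  assumes m: "0 < m"
  shows "card {e \<in> corona_mixed_edges k p t m. x \<in> e \<and> y \<in> e}
       = (\<Sum>i<t. \<Sum>j<p. card {e \<in> mixed_subsets k (part_U p i) (copy_W p t m i j). x \<in> e \<and> y \<in> e})"
proof -
  define M where "M i j = {e \<in> mixed_subsets k (part_U p i) (copy_W p t m i j). x \<in> e \<and> y \<in> e}" for i j
  have fin: "finite (M i j)" for i j unfolding M_def by (simp add: finite_mixed_subsets)
  have "{e \<in> corona_mixed_edges k p t m. x \<in> e \<and> y \<in> e} = (\<Union>i<t. \<Union>j<p. M i j)"
    unfolding corona_mixed_edges_def M_def by blast
  also have "card \<dots> = (\<Sum>i<t. card (\<Union>j<p. M i j))"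
    using corona_mixed_blocks_disjoint[OF m] fin unfolding M_def by (intro card_UN_disjoint) blast+
  also have "\<dots> = (\<Sum>i<t. \<Sum>j<p. card (M i j))"
    using corona_mixed_blocks_disjoint[OF m] fin unfolding M_def
    by (intro sum.cong refl card_UN_disjoint) blast+
  finally show ?thesis unfolding M_def .
qed

lemma card_corona_block_through:
  assumes "i < t" and "x \<noteq> y"
  shows "real (card {e \<in> mixed_subsets k (part_U p i) (copy_W p t m i j). x \<in> e \<and> y \<in> e})
       = (if x \<in> part_U p i \<union> copy_W p t m i j \<and> y \<in> part_U p i \<union> copy_W p t m i j then
            real (binom (p + m - 2) (int k - 2))
            - (if x \<in> part_U p i \<and> y \<in> part_U p i then real (binom (p - 2) (int k - 2)) else 0)
            - (if x \<in> copy_W p t m i j \<and> y \<in> copy_W p t m i j then real (binom (m - 2) (int k - 2)) else 0)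
          else 0)"
  using assms part_U_copy_W_disjoint by (simp add: card_mixed_subsets_containing_pair)

lemma corona_adjacency_base:
  assumes p: "0 < p" and m: "0 < m" and E0: "\<forall>e\<in>E0. e \<subseteq> {0..<p * t}" and Gs: "\<forall>i<t. finite (Gs i)"
    and x: "x < p * t" and y: "y < p * t" and xy: "x \<noteq> y"
  shows "real (card {e \<in> corona_edges k p t m E0 Gs. x \<in> e \<and> y \<in> e})
       = real (card {e \<in> E0. x \<in> e \<and> y \<in> e})
         + (if x div p = y div p
            then real p * (real (binom (p + m - 2) (int k - 2)) - real (binom (p - 2) (int k - 2))) else 0)"
    (is "_ = _ + ?a")
proof -
  let ?c = "if x div p = y div p
            then real (binom (p + m - 2) (int k - 2)) - real (binom (p - 2) (int k - 2)) else 0"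
  have "e \<notin> corona_copy_edges p t m Gs" if "x \<in> e" for e
    using that x corona_copy_edge_ge[of e p t m Gs x] by auto
  then have no_copy: "{e \<in> corona_copy_edges p t m Gs. x \<in> e \<and> y \<in> e} = {}" by blast
  have "real (card {e \<in> corona_mixed_edges k p t m. x \<in> e \<and> y \<in> e})
      = (\<Sum>i<t. \<Sum>j<p. if i = x div p then ?c else 0)"
    unfolding card_corona_mixed_edges_through[OF m] of_nat_sum
  proof (intro sum.cong refl)
    fix i j assume "i \<in> {..<t}"
    then have i: "i < t" by simp
    have xW: "x \<notin> copy_W p t m i j" and yW: "y \<notin> copy_W p t m i j"
      using x y copy_W_ge not_le by blast+
    have xU: "x \<in> part_U p i \<longleftrightarrow> i = x div p" and yU: "y \<in> part_U p i \<longleftrightarrow> i = y div p"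
      using mem_part_U[OF p] by auto
    show "real (card {e \<in> mixed_subsets k (part_U p i) (copy_W p t m i j). x \<in> e \<and> y \<in> e})
        = (if i = x div p then ?c else 0)"
      unfolding card_corona_block_through[OF i xy] Un_iff xU yU using xW yW by auto
  qed
  also have "\<dots> = (\<Sum>i<t. if i = x div p then real p * ?c else 0)"
    by (intro sum.cong refl) simp
  also have "\<dots> = ?a"
    using x by (subst sum.delta) (simp_all add: less_mult_imp_div_less mult.commute)
  finally show ?thesis
    using card_corona_edges_through[OF E0 Gs, of k m x y] no_copy by simp
qed

lemma corona_adjacency_link:
  assumes p: "0 < p" and m: "0 < m" and E0: "\<forall>e\<in>E0. e \<subseteq> {0..<p * t}" and Gs: "\<forall>i<t. finite (Gs i)"
    and x: "x < p * t" and y: "p * t \<le> y" "y < p * t + t * p * m"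
  shows "real (card {e \<in> corona_edges k p t m E0 Gs. x \<in> e \<and> y \<in> e})
       = (if x div p = (y - p * t) div m div p then real (binom (p + m - 2) (int k - 2)) else 0)"
    (is "_ = ?b")
proof -
  define q where "q = (y - p * t) div m"
  have "y - p * t < t * p * m" using y by simp
  then have q: "q < t * p" unfolding q_def by (rule less_mult_imp_div_less)
  have "e \<notin> corona_copy_edges p t m Gs" if "x \<in> e" for e
    using that x corona_copy_edge_ge[of e p t m Gs x] by auto
  then have no_copy: "{e \<in> corona_copy_edges p t m Gs. x \<in> e \<and> y \<in> e} = {}" by blast
  have "\<not> y < p * t" using y by simp
  then have no_base: "{e \<in> E0. x \<in> e \<and> y \<in> e} = {}" using E0 atLeastLessThan_iff by blast
  have xy: "x \<noteq> y" using x y by simp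
  have "real (card {e \<in> corona_mixed_edges k p t m. x \<in> e \<and> y \<in> e})
      = (\<Sum>i<t. \<Sum>j<p. if i * p + j = q then ?b else 0)"
    unfolding card_corona_mixed_edges_through[OF m] of_nat_sum
  proof (intro sum.cong refl)
    fix i j assume "i \<in> {..<t}" "j \<in> {..<p}"
    then have i: "i < t" and j: "j < p" by simp_all
    have xW: "x \<notin> copy_W p t m i j" and yU: "y \<notin> part_U p i"
      using x y copy_W_ge part_U_less[OF i] not_le by blast+
    have xU: "x \<in> part_U p i \<longleftrightarrow> i = x div p" using mem_part_U[OF p] by auto
    have yW: "y \<in> copy_W p t m i j \<longleftrightarrow> i * p + j = q" using mem_copy_W[OF m] y unfolding q_def by auto
    have "i * p + j = q \<Longrightarrow> i = q div p" using j mult_add_eq_iff_div_mod by blast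
    then show "real (card {e \<in> mixed_subsets k (part_U p i) (copy_W p t m i j). x \<in> e \<and> y \<in> e})
        = (if i * p + j = q then ?b else 0)"
      unfolding card_corona_block_through[OF i xy] Un_iff xU yW q_def[symmetric] using xW yU by auto
  qed
  also have "\<dots> = ?b" by (rule sum_pair_index_delta[OF q])
  finally show ?thesis
    using card_corona_edges_through[OF E0 Gs, of k m x y] no_copy no_base by simp
qed

lemma corona_adjacency_copies:
  assumes p: "0 < p" and m: "0 < m" and E0: "\<forall>e\<in>E0. e \<subseteq> {0..<p * t}"
    and Gs: "\<forall>i<t. \<forall>e\<in>Gs i. e \<subseteq> {0..<m}" "\<forall>i<t. finite (Gs i)"
    and x: "p * t \<le> x" "x < p * t + t * p * m" and y: "p * t \<le> y" "y < p * t + t * p * m" and xy: "x \<noteq> y"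
  shows "real (card {e \<in> corona_edges k p t m E0 Gs. x \<in> e \<and> y \<in> e})
       = (if (x - p * t) div m = (y - p * t) div m
          then real (card {e \<in> Gs ((x - p * t) div m div p). (x - p * t) mod m \<in> e \<and> (y - p * t) mod m \<in> e})
               + (real (binom (p + m - 2) (int k - 2)) - real (binom (m - 2) (int k - 2)))
          else 0)"
proof -
  define q where "q = (x - p * t) div m"
  let ?c = "if q = (y - p * t) div m
            then real (binom (p + m - 2) (int k - 2)) - real (binom (m - 2) (int k - 2)) else 0"
  have "x - p * t < t * p * m" using x by simp
  then have q: "q < t * p" unfolding q_def by (rule less_mult_imp_div_less)
  have "\<not> x < p * t" using x by simp
  then have no_base: "{e \<in> E0. x \<in> e \<and> y \<in> e} = {}" using E0 atLeastLessThan_iff by blast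
  have "real (card {e \<in> corona_mixed_edges k p t m. x \<in> e \<and> y \<in> e})
      = (\<Sum>i<t. \<Sum>j<p. if i * p + j = q then ?c else 0)"
    unfolding card_corona_mixed_edges_through[OF m] of_nat_sum
  proof (intro sum.cong refl)
    fix i j assume "i \<in> {..<t}"
    then have i: "i < t" by simp
    then have xU: "x \<notin> part_U p i" and yU: "y \<notin> part_U p i"
      using x y part_U_less not_le by blast+
    have xW: "x \<in> copy_W p t m i j \<longleftrightarrow> i * p + j = q" using mem_copy_W[OF m] x unfolding q_def by auto
    have yW: "y \<in> copy_W p t m i j \<longleftrightarrow> i * p + j = (y - p * t) div m" using mem_copy_W[OF m] y by auto
    show "real (card {e \<in> mixed_subsets k (part_U p i) (copy_W p t m i j). x \<in> e \<and> y \<in> e})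
        = (if i * p + j = q then ?c else 0)"
      unfolding card_corona_block_through[OF i xy] Un_iff xW yW using xU yU by auto
  qed
  also have "\<dots> = ?c" by (rule sum_pair_index_delta[OF q])
  finally show ?thesis
    using card_corona_edges_through[OF E0 Gs(2), of k m x y] no_base
      card_corona_copy_edges_through[OF Gs(1) x y(1)]
    unfolding q_def by simp
qed

section \<open>The adjacency matrix of the corona\<close>

(* Column y of this block is the vertex p t + y, i.e. vertex y mod m of copy (y div m) mod p of
   G_i with i = y div m div p (see copy_vtx). *)
definition corona_link_mat :: "nat \<Rightarrow> nat \<Rightarrow> nat \<Rightarrow> real \<Rightarrow> real mat" where
  "corona_link_mat p t m b = mat (p * t) (t * p * m) (\<lambda>(x, y). if x div p = y div m div p then b else 0)"

lemma dim_corona_link_mat [simp]: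
  "dim_row (corona_link_mat p t m b) = p * t" "dim_col (corona_link_mat p t m b) = t * p * m"
  by (simp_all add: corona_link_mat_def)

lemma corona_link_mat_carrier [simp]: "corona_link_mat p t m b \<in> carrier_mat (p * t) (t * p * m)"
  by (simp add: carrier_matI)

lemma index_corona_base_block:
  assumes p: "0 < p" and x: "x < p * t" and y: "y < p * t"
  shows "(adj_mat (p * t) E0 + a \<cdot>\<^sub>m kron (1\<^sub>m t) (J_mat p - 1\<^sub>m p)) $$ (x, y)
       = (if x = y then 0 else real (card {e \<in> E0. x \<in> e \<and> y \<in> e}) + (if x div p = y div p then a else 0))"
proof -
  have "J_mat p - 1\<^sub>m p \<in> carrier_mat p p" by (rule minus_carrier_mat) simp
  moreover have "x div p = y div p \<Longrightarrow> x mod p = y mod p \<longleftrightarrow> x = y" by (metis div_mult_mod_eq)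
  ultimately have "kron (1\<^sub>m t) (J_mat p - 1\<^sub>m p) $$ (x, y) = (if x div p = y div p \<and> x \<noteq> y then 1 else 0)"
    using x y p by (auto simp: index_kron_one_mat J_mat_def mult.commute)
  moreover have "(adj_mat (p * t) E0 + a \<cdot>\<^sub>m kron (1\<^sub>m t) (J_mat p - 1\<^sub>m p)) $$ (x, y)
      = adj_mat (p * t) E0 $$ (x, y) + a * kron (1\<^sub>m t) (J_mat p - 1\<^sub>m p) $$ (x, y)"
    using x y by (simp add: mult.commute)
  ultimately show ?thesis using x y by (simp add: index_adj_mat)
qed

lemma index_block_diag_mat_adj_complement:
  assumes m: "0 < m" and x: "x < n * m" and y: "y < n * m"
  shows "block_diag_mat n m (\<lambda>q. adj_mat m (G q) + c \<cdot>\<^sub>m (J_mat m - 1\<^sub>m m)) $$ (x, y)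
       = (if x div m = y div m then
            (if x = y then 0 else real (card {e \<in> G (x div m). x mod m \<in> e \<and> y mod m \<in> e}) + c)
          else 0)"
proof -
  have "x div m = y div m \<Longrightarrow> x mod m = y mod m \<longleftrightarrow> x = y" by (metis div_mult_mod_eq)
  then show ?thesis using x y m by (auto simp: index_block_diag_mat index_adj_mat J_mat_def)
qed

lemma adj_mat_corona:
  assumes G0: "hypergraph {0..<p * t} E0" and Gs: "\<forall>i<t. hypergraph {0..<m} (Gs i)"
    and p: "0 < p" and m: "0 < m"
    and a: "a = (if p \<ge> 2 then real p * (real (binom (p + m - 2) (int k - 2)) - real (binom (p - 2) (int k - 2))) else 0)"
    and b: "b = real (binom (p + m - 2) (int k - 2))"
    and c: "c = real (binom (p + m - 2) (int k - 2)) - real (binom (m - 2) (int k - 2))"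
  shows "adj_mat (corona_size p t m) (corona_edges k p t m E0 Gs)
       = four_block_mat (adj_mat (p * t) E0 + a \<cdot>\<^sub>m kron (1\<^sub>m t) (J_mat p - 1\<^sub>m p))
           (corona_link_mat p t m b) (transpose_mat (corona_link_mat p t m b))
           (block_diag_mat (t * p) m (\<lambda>q. adj_mat m (Gs (q div p)) + c \<cdot>\<^sub>m (J_mat m - 1\<^sub>m m)))"
    (is "?A = four_block_mat ?P ?B (transpose_mat ?B) ?D")
proof -
  have E0: "\<forall>e\<in>E0. e \<subseteq> {0..<p * t}" using G0 unfolding hypergraph_def by blast
  have Gs_sub: "\<forall>i<t. \<forall>e\<in>Gs i. e \<subseteq> {0..<m}" and Gs_fin: "\<forall>i<t. finite (Gs i)"
    using Gs unfolding hypergraph_def by (blast, metis finite_Pow_iff finite_atLeastLessThan finite_subset Pow_iff subsetI)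
  have P: "?P \<in> carrier_mat (t * p) (t * p)"
    by (simp add: adj_mat_def kron_def J_mat_def carrier_matI mult.commute)
  have D: "?D \<in> carrier_mat (t * p * m) (t * p * m)" by simp
  show ?thesis
  proof (rule eq_matI)
    fix x y assume "x < dim_row (four_block_mat ?P ?B (transpose_mat ?B) ?D)"
      and "y < dim_col (four_block_mat ?P ?B (transpose_mat ?B) ?D)"
    then have x: "x < p * t + t * p * m" and y: "y < p * t + t * p * m" using P by (auto simp: mult.commute)
    have lhs: "?A $$ (x, y) = (if x = y then 0 else real (card {e \<in> corona_edges k p t m E0 Gs. x \<in> e \<and> y \<in> e}))"
      using x y by (simp add: index_adj_mat corona_size_def)
    have rhs: "four_block_mat ?P ?B (transpose_mat ?B) ?D $$ (x, y)
        = (if x < p * t then if y < p * t then ?P $$ (x, y) else ?B $$ (x, y - p * t)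
           else if y < p * t then ?B $$ (y, x - p * t) else ?D $$ (x - p * t, y - p * t))"
      using x y P D by (simp add: mult.commute)
    consider "x < p * t" "y < p * t" | "x < p * t" "\<not> y < p * t" | "\<not> x < p * t" "y < p * t"
      | "\<not> x < p * t" "\<not> y < p * t" by blast
    then show "?A $$ (x, y) = four_block_mat ?P ?B (transpose_mat ?B) ?D $$ (x, y)"
    proof cases
      case 1
      have "2 \<le> p" if "x div p = y div p" "x \<noteq> y" using that p by (cases "p = 1") auto
      then show ?thesis
        unfolding lhs rhs index_corona_base_block[OF p 1]
        using 1 a corona_adjacency_base[OF p m E0 Gs_fin 1, of k] by auto
    next
      case 2
      then show ?thesis
        unfolding lhs rhs using y corona_adjacency_link[OF p m E0 Gs_fin 2(1) _ y, of k] b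
        by (simp add: corona_link_mat_def)
    next
      case 3
      have "{e \<in> corona_edges k p t m E0 Gs. x \<in> e \<and> y \<in> e} = {e \<in> corona_edges k p t m E0 Gs. y \<in> e \<and> x \<in> e}"
        by blast
      then show ?thesis
        unfolding lhs rhs using 3 x corona_adjacency_link[OF p m E0 Gs_fin 3(2) _ x, of k] b
        by (simp add: corona_link_mat_def)
    next
      case 4
      have qx: "x - p * t < t * p * m" and qy: "y - p * t < t * p * m" and eq: "x - p * t = y - p * t \<longleftrightarrow> x = y"
        using x y 4 by auto
      show ?thesis
        unfolding lhs rhs index_block_diag_mat_adj_complement[OF m qx qy] eq
        using 4 x y c corona_adjacency_copies[OF p m E0 Gs_sub Gs_fin _ x _ y, of k] by auto
    qed
  qed (use P D in \<open>simp_all add: corona_size_def mult.commute\<close>)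
qed

lemma corona_link_mat_mult_transpose:
  assumes p: "0 < p" and m: "0 < m" and x: "x < p * t" and y: "y < p * t"
  shows "(corona_link_mat p t m b * transpose_mat (corona_link_mat p t m b)) $$ (x, y)
       = (if x div p = y div p then real (m * p) * b\<^sup>2 else 0)"
proof -
  have "(corona_link_mat p t m b * transpose_mat (corona_link_mat p t m b)) $$ (x, y)
      = (\<Sum>z<t * p * m. corona_link_mat p t m b $$ (x, z) * transpose_mat (corona_link_mat p t m b) $$ (z, y))"
    by (rule index_mult_mat_sum) (use x y in auto)
  also have "\<dots> = (\<Sum>z<t * p * m. if z div (m * p) = x div p then (if x div p = y div p then b\<^sup>2 else 0) else 0)"
    using x y by (intro sum.cong refl) (auto simp: corona_link_mat_def div_mult2_eq power2_eq_square)
  also have "\<dots> = (\<Sum>w<m * p. if x div p = y div p then b\<^sup>2 else 0)"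
    unfolding mult.assoc[of t p m] mult.commute[of p m]
    using x p m by (intro sum_lessThan_mult_block) (simp_all add: less_mult_imp_div_less mult.commute)
  finally show ?thesis by simp
qed

(* No hypothesis on \<sigma>: for \<sigma> = 0 both sides degenerate in the same way, since 1 / 0 = 0. *)
lemma corona_schur_complement:
  assumes p: "0 < p" and m: "0 < m"
  shows "adj_mat (p * t) E0 + a \<cdot>\<^sub>m kron (1\<^sub>m t) (J_mat p - 1\<^sub>m p) - l \<cdot>\<^sub>m 1\<^sub>m (t * p)
         - corona_link_mat p t m b * ((1 / \<sigma>) \<cdot>\<^sub>m transpose_mat (corona_link_mat p t m b))
       = adj_mat (p * t) E0 + kron (1\<^sub>m t) ((a - b\<^sup>2 * real p * real m / \<sigma>) \<cdot>\<^sub>m J_mat p - (a + l) \<cdot>\<^sub>m 1\<^sub>m p)"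
    (is "?L = adj_mat (p * t) E0 + kron (1\<^sub>m t) ?Z")
proof (rule eq_matI)
  fix x y assume "x < dim_row (adj_mat (p * t) E0 + kron (1\<^sub>m t) ?Z)"
    and "y < dim_col (adj_mat (p * t) E0 + kron (1\<^sub>m t) ?Z)"
  then have x: "x < p * t" and y: "y < p * t" by (simp_all add: mult.commute)
  then have "x < t * p" "y < t * p" by (simp_all add: mult.commute)
  moreover have "J_mat p - 1\<^sub>m p \<in> carrier_mat p p" and "?Z \<in> carrier_mat p p"
    by (rule minus_carrier_mat, simp)+
  ultimately have kron:
    "kron (1\<^sub>m t) (J_mat p - 1\<^sub>m p) $$ (x, y)
       = (if x div p = y div p then (J_mat p - 1\<^sub>m p) $$ (x mod p, y mod p) else 0)"
    "kron (1\<^sub>m t) ?Z $$ (x, y) = (if x div p = y div p then ?Z $$ (x mod p, y mod p) else 0)"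
    by (simp_all add: index_kron_one_mat)
  have same: "x div p = y div p \<Longrightarrow> x mod p = y mod p \<longleftrightarrow> x = y" by (metis div_mult_mod_eq)
  have link: "(corona_link_mat p t m b * ((1 / \<sigma>) \<cdot>\<^sub>m transpose_mat (corona_link_mat p t m b))) $$ (x, y)
      = (if x div p = y div p then b\<^sup>2 * real p * real m / \<sigma> else 0)"
    using corona_link_mat_mult_transpose[OF p m x y, of b] x y
    by (simp add: mult_smult_distrib[of _ "p * t" "t * p * m" _ "p * t"])
  show "?L $$ (x, y) = (adj_mat (p * t) E0 + kron (1\<^sub>m t) ?Z) $$ (x, y)"
    using x y p same link kron
    by (auto simp: J_mat_def adj_mat_def mult.commute algebra_simps)
qed (simp_all add: mult.commute)

lemma corona_char_mat_blocks:
  assumes hyp: "hypergraph {0..<p * t} E0" "\<forall>i<t. hypergraph {0..<m} (Gs i)"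
    and p: "0 < p" and m: "0 < m"
    and a: "a = (if p \<ge> 2 then real p * (real (binom (p + m - 2) (int k - 2)) - real (binom (p - 2) (int k - 2))) else 0)"
    and b: "b = real (binom (p + m - 2) (int k - 2))"
    and c: "c = real (binom (p + m - 2) (int k - 2)) - real (binom (m - 2) (int k - 2))"
    and Y: "\<forall>i<t. Y i = adj_mat m (Gs i) + c \<cdot>\<^sub>m (J_mat m - 1\<^sub>m m)"
  shows "adj_mat (corona_size p t m) (corona_edges k p t m E0 Gs) - l \<cdot>\<^sub>m 1\<^sub>m (corona_size p t m)
       = four_block_mat (adj_mat (p * t) E0 + a \<cdot>\<^sub>m kron (1\<^sub>m t) (J_mat p - 1\<^sub>m p) - l \<cdot>\<^sub>m 1\<^sub>m (t * p))
           (corona_link_mat p t m b) (transpose_mat (corona_link_mat p t m b))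
           (block_diag_mat (t * p) m (\<lambda>q. Y (q div p) - l \<cdot>\<^sub>m 1\<^sub>m m))"
proof -
  let ?P = "adj_mat (p * t) E0 + a \<cdot>\<^sub>m kron (1\<^sub>m t) (J_mat p - 1\<^sub>m p)" and ?B = "corona_link_mat p t m b"
    and ?D = "block_diag_mat (t * p) m (\<lambda>q. adj_mat m (Gs (q div p)) + c \<cdot>\<^sub>m (J_mat m - 1\<^sub>m m))"
  have P: "?P \<in> carrier_mat (t * p) (t * p)" by (simp add: carrier_matI)
  have B: "?B \<in> carrier_mat (t * p) (t * p * m)" by (metis corona_link_mat_carrier mult.commute)
  have D: "?D - l \<cdot>\<^sub>m 1\<^sub>m (t * p * m) = block_diag_mat (t * p) m (\<lambda>q. Y (q div p) - l \<cdot>\<^sub>m 1\<^sub>m m)"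
    unfolding block_diag_mat_minus_smult_one[OF m] using Y
    by (intro block_diag_mat_cong) (simp add: less_mult_imp_div_less)
  have N: "corona_size p t m = t * p + t * p * m" by (simp add: corona_size_def mult.commute)
  have "adj_mat (corona_size p t m) (corona_edges k p t m E0 Gs) - l \<cdot>\<^sub>m 1\<^sub>m (corona_size p t m)
      = four_block_mat ?P ?B (transpose_mat ?B) ?D - l \<cdot>\<^sub>m 1\<^sub>m (t * p + t * p * m)"
    unfolding N[symmetric] adj_mat_corona[OF hyp p m a b c] ..
  also have "\<dots> = four_block_mat (?P - l \<cdot>\<^sub>m 1\<^sub>m (t * p)) ?B (transpose_mat ?B) (?D - l \<cdot>\<^sub>m 1\<^sub>m (t * p * m))"
    by (rule four_block_mat_minus_smult_one[OF P B transpose_carrier_mat[THEN iffD2, OF B] block_diag_mat_carrier])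
  finally show ?thesis unfolding D .
qed

lemma corona_copy_blocks_solve:
  assumes m: "0 < m" and Gi: "\<forall>i<t. kr_regular {0..<m} (Gs i) k r"
    and Y: "\<forall>i<t. Y i = adj_mat m (Gs i) + c \<cdot>\<^sub>m (J_mat m - 1\<^sub>m m)"
    and inv: "\<forall>i<t. invertible_mat (Y i - l \<cdot>\<^sub>m 1\<^sub>m m)"
  shows "block_diag_mat (t * p) m (\<lambda>q. Y (q div p) - l \<cdot>\<^sub>m 1\<^sub>m m)
           * ((1 / (real r * (real k - 1) + c * (real m - 1) - l)) \<cdot>\<^sub>m transpose_mat (corona_link_mat p t m b))
       = transpose_mat (corona_link_mat p t m b)"
proof (rule block_diag_mat_mult_inverse_row_sum[OF _ m])
  fix q assume "q < t * p"
  then have "q div p < t" by (rule less_mult_imp_div_less)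
  then show "Y (q div p) - l \<cdot>\<^sub>m 1\<^sub>m m \<in> carrier_mat m m" "invertible_mat (Y (q div p) - l \<cdot>\<^sub>m 1\<^sub>m m)"
    "\<And>i. i < m \<Longrightarrow> (\<Sum>j<m. (Y (q div p) - l \<cdot>\<^sub>m 1\<^sub>m m) $$ (i, j)) = real r * (real k - 1) + c * (real m - 1) - l"
    using Y inv Gi regular_adj_mat_complement_row_sum by auto
qed (auto simp: corona_link_mat_def)

theorem theorem3p1:
  fixes k r m p t :: nat and E0 :: "nat set set" and Gs :: "nat \<Rightarrow> nat set set" and lam :: real
    and a b c :: real and Y :: "nat \<Rightarrow> real mat"
  assumes G0: "k_uniform {0..<p*t} E0 k"
    and p: "p \<ge> 1"
    and m: "m \<ge> 2"
    and Gi: "\<forall>i<t. kr_regular {0..<m} (Gs i) k r"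
    and a_def: "a = (if p \<ge> 2 then real p * (real (binom (p+m-2) (int k - 2)) - real (binom (p-2) (int k - 2))) else 0)"
    and b_def: "b = real (binom (p+m-2) (int k - 2))"
    and c_def: "c = real (binom (p+m-2) (int k - 2)) - real (binom (m-2) (int k - 2))"
    and Y_def: "\<forall>i<t. Y i = adj_mat m (Gs i) + c \<cdot>\<^sub>m (J_mat m - 1\<^sub>m m)"
    and inv: "\<forall>i<t. invertible_mat (Y i - lam \<cdot>\<^sub>m 1\<^sub>m m)"
  shows "char_val (adj_mat (corona_size p t m) (corona_edges k p t m E0 Gs)) lam
       = (\<Prod>i<t. det (Y i - lam \<cdot>\<^sub>m 1\<^sub>m m)) ^ p
         * det (adj_mat (p*t) E0
             + kron (1\<^sub>m t)
                 ((a - b^2 * real p * real m / (real r * (real k - 1) + c * (real m - 1) - lam)) \<cdot>\<^sub>m J_mat p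
                  - (a + lam) \<cdot>\<^sub>m 1\<^sub>m p))"
proof -
  have p0: "0 < p" and m0: "0 < m" using p m by simp_all
  have hyp: "hypergraph {0..<p * t} E0" "\<forall>i<t. hypergraph {0..<m} (Gs i)"
    using G0 Gi unfolding kr_regular_def k_uniform_def by blast+
  let ?B = "corona_link_mat p t m b" and ?Q = "block_diag_mat (t * p) m (\<lambda>q. Y (q div p) - lam \<cdot>\<^sub>m 1\<^sub>m m)"
    and ?P = "adj_mat (p * t) E0 + a \<cdot>\<^sub>m kron (1\<^sub>m t) (J_mat p - 1\<^sub>m p) - lam \<cdot>\<^sub>m 1\<^sub>m (t * p)"
    and ?X = "(1 / (real r * (real k - 1) + c * (real m - 1) - lam)) \<cdot>\<^sub>m transpose_mat (corona_link_mat p t m b)"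
  have B: "?B \<in> carrier_mat (t * p) (t * p * m)" by (metis corona_link_mat_carrier mult.commute)
  have "char_val (adj_mat (corona_size p t m) (corona_edges k p t m E0 Gs)) lam
      = det (four_block_mat ?P ?B (transpose_mat ?B) ?Q)"
    unfolding char_val_def dim_adj_mat corona_char_mat_blocks[OF hyp p0 m0 a_def b_def c_def Y_def] ..
  also have "\<dots> = det (?P - ?B * ?X) * det ?Q"
    by (rule det_four_block_mat_schur[OF _ B _ _ _ corona_copy_blocks_solve[OF m0 Gi Y_def inv]])
      (use B in \<open>auto simp: carrier_matI\<close>)
  also have "det ?Q = (\<Prod>i<t. det (Y i - lam \<cdot>\<^sub>m 1\<^sub>m m)) ^ p"
    using Y_def by (intro det_block_diag_mat_div[OF _ m0]) (simp add: carrier_matI)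
  finally show ?thesis
    unfolding corona_schur_complement[OF p0 m0] by (simp only: mult.commute)
qed

end
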